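(* Let $Q=(M,\Omega)$ be a $3$-sheltering matroid on ground set $U$. The following are equivalent: (1) $M$ is binary, $r(M)\le|\Omega|$, and every class $\omega\in\Omega$ belongs to the cycle space of $M$; (2) there is a looped simple graph $G$ and a matroid isomorphism $M\to M[IAS(G)]$ that maps the classes of $\Omega$ onto the vertex triples of $G$.
   Context: A sheltering matroid is a pair $Q=(M,\Omega)$ where $M$ is a matroid on a finite set $U$ and $\Omega$ a partition of $U$ such that for every independent set $I$ of $M$ meeting each class in at most one element, and every $2$-element subset $\{x,y\}$ of a class $\omega$ with $\omega\cap I=\emptyset$, $I\cup\{x\}$ or $I\cup\{y\}$ is independent in $M$. It is a $3$-sheltering matroid if all classes of $\Omega$ have size $3$. The cycle space of a binary matroid $M$ on $U$ is the set of subsets of $U$ that are disjoint unions (equivalently symmetric differences) of circuits; for a binary representation, these are the sets of columns summing to $0$. A looped simple graph is a finite graph in which each vertex carries at most one loop and no two distinct vertices are joined by more than one edge. $A(G)$ is the $V(G)\times V(G)$ matrix over $GF(2)$ with diagonal entry $1$ exactly at looped vertices and off-diagonal entry $1$ exactly for adjacent distinct vertices. $IAS(G)=(I\mid A(G)\mid A(G)+I)$ over $GF(2)$, rows indexed by $V(G)$; the $v$-columns of the three blocks are labelled $\phi_G(v),\chi_G(v),\psi_G(v)$. $M[IAS(G)]$ is the binary column matroid of $IAS(G)$ on $W(G)=\{\phi_G(v),\chi_G(v),\psi_G(v):v\in V(G)\}$, and the vertex triple of $v$ is $\{\phi_G(v),\chi_G(v),\psi_G(v)\}$. *)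

theory Defs
  imports Main "HOL-Library.Z2" "HOL-Library.Disjoint_Sets"
begin

definition matroid :: "'a set \<Rightarrow> ('a set \<Rightarrow> bool) \<Rightarrow> bool" where
  "matroid U indep \<longleftrightarrow>
     finite U \<and>
     (\<forall>I. indep I \<longrightarrow> I \<subseteq> U) \<and>
     indep {} \<and>
     (\<forall>I J. indep J \<and> I \<subseteq> J \<longrightarrow> indep I) \<and>
     (\<forall>I J. indep I \<and> indep J \<and> card I < card J \<longrightarrow> (\<exists>x\<in>J - I. indep (insert x I)))"

definition mrank :: "('a set \<Rightarrow> bool) \<Rightarrow> nat" where
  "mrank indep = Max {card I | I. indep I}"

definition circuit :: "'a set \<Rightarrow> ('a set \<Rightarrow> bool) \<Rightarrow> 'a set \<Rightarrow> bool" where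
  "circuit U indep C \<longleftrightarrow> C \<subseteq> U \<and> \<not> indep C \<and> (\<forall>x\<in>C. indep (C - {x}))"

definition cycle_space :: "'a set \<Rightarrow> ('a set \<Rightarrow> bool) \<Rightarrow> 'a set set" where
  "cycle_space U indep = {\<Union>F | F. F \<subseteq> {C. circuit U indep C} \<and> disjoint F}"

definition gf2_lin_indep :: "('e \<Rightarrow> 'r \<Rightarrow> bit) \<Rightarrow> 'e set \<Rightarrow> bool" where
  "gf2_lin_indep v I \<longleftrightarrow>
     (\<forall>c :: 'e \<Rightarrow> bit. (\<forall>r. (\<Sum>x\<in>I. c x * v x r) = 0) \<longrightarrow> (\<forall>x\<in>I. c x = 0))"

definition col_indep :: "'e set \<Rightarrow> ('e \<Rightarrow> 'r \<Rightarrow> bit) \<Rightarrow> 'e set \<Rightarrow> bool" where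
  "col_indep U v I \<longleftrightarrow> I \<subseteq> U \<and> gf2_lin_indep v I"

definition binary :: "'a set \<Rightarrow> ('a set \<Rightarrow> bool) \<Rightarrow> bool" where
  "binary U indep \<longleftrightarrow> (\<exists>v :: 'a \<Rightarrow> nat \<Rightarrow> bit. \<forall>I. indep I \<longleftrightarrow> col_indep U v I)"

definition sheltering :: "'a set \<Rightarrow> ('a set \<Rightarrow> bool) \<Rightarrow> 'a set set \<Rightarrow> bool" where
  "sheltering U indep \<Omega> \<longleftrightarrow>
     matroid U indep \<and> partition_on U \<Omega> \<and>
     (\<forall>I. indep I \<and> (\<forall>\<omega>\<in>\<Omega>. card (I \<inter> \<omega>) \<le> 1) \<longrightarrow>
        (\<forall>\<omega>\<in>\<Omega>. \<omega> \<inter> I = {} \<longrightarrow>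
           (\<forall>x y. x \<in> \<omega> \<and> y \<in> \<omega> \<and> x \<noteq> y \<longrightarrow> indep (insert x I) \<or> indep (insert y I))))"

definition three_sheltering :: "'a set \<Rightarrow> ('a set \<Rightarrow> bool) \<Rightarrow> 'a set set \<Rightarrow> bool" where
  "three_sheltering U indep \<Omega> \<longleftrightarrow> sheltering U indep \<Omega> \<and> (\<forall>\<omega>\<in>\<Omega>. card \<omega> = 3)"

text \<open>A looped simple graph: finite vertex set V and a set E of edges, each edge being
  a 1-element (loop) or 2-element subset of V.  Hence at most one loop per vertex and
  no parallel edges.\<close>
definition looped_simple_graph :: "'v set \<Rightarrow> 'v set set \<Rightarrow> bool" where
  "looped_simple_graph V E \<longleftrightarrow> finite V \<and> (\<forall>e\<in>E. e \<subseteq> V \<and> (card e = 1 \<or> card e = 2))"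

text \<open>Adjacency matrix over GF(2): diagonal 1 at looped vertices, off-diagonal 1 for
  adjacent vertices.\<close>
definition adj_matrix :: "'v set set \<Rightarrow> 'v \<Rightarrow> 'v \<Rightarrow> bit" where
  "adj_matrix E v w = (if {v, w} \<in> E then 1 else 0)"

datatype 'v wlabel = Phi 'v | Chi 'v | Psi 'v

definition W :: "'v set \<Rightarrow> 'v wlabel set" where
  "W V = Phi ` V \<union> Chi ` V \<union> Psi ` V"

definition vertex_triple :: "'v \<Rightarrow> 'v wlabel set" where
  "vertex_triple v = {Phi v, Chi v, Psi v}"

text \<open>Columns of IAS(G) = (I | A(G) | A(G)+I), rows indexed by vertices.\<close>
fun ias_col :: "'v set set \<Rightarrow> 'v wlabel \<Rightarrow> 'v \<Rightarrow> bit" where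
  "ias_col E (Phi v) = (\<lambda>u. if u = v then 1 else 0)"
| "ias_col E (Chi v) = (\<lambda>u. adj_matrix E u v)"
| "ias_col E (Psi v) = (\<lambda>u. adj_matrix E u v + (if u = v then 1 else 0))"

definition ias_indep :: "'v set \<Rightarrow> 'v set set \<Rightarrow> 'v wlabel set \<Rightarrow> bool" where
  "ias_indep V E = col_indep (W V) (ias_col E)"

definition matroid_iso :: "('a \<Rightarrow> 'b) \<Rightarrow> 'a set \<Rightarrow> ('a set \<Rightarrow> bool) \<Rightarrow> 'b set \<Rightarrow> ('b set \<Rightarrow> bool) \<Rightarrow> bool" where
  "matroid_iso f U indep U' indep' \<longleftrightarrow>
     bij_betw f U U' \<and> (\<forall>I. I \<subseteq> U \<longrightarrow> (indep I \<longleftrightarrow> indep' (f ` I)))"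

end

theory Submission
  imports Defs
begin

text \<open>
  (2) implies (1): in M[IAS(G)] the columns phi(v) are the unit vectors, so they form a basis of
  size |V| = |Omega|, and the three columns of each vertex triple sum to zero; for a binary
  matroid the cycle space is exactly the set of subsets whose columns sum to zero.

  (1) implies (2): the sheltering property yields an independent transversal T of Omega, which
  is a basis because r(M) \<le> |Omega| = |T|. Hence M is represented by a matrix (I | ...) whose
  identity part sits on T. Write each class as {t, a, b} with t in T; since the class is in the
  cycle space, column b is column t plus column a. The sheltering property forces the matrix
  formed by the columns a to be symmetric, so it is the adjacency matrix A(G) of a looped
  simple graph G, and t, a, b correspond to phi, chi, psi.
\<close>

section \<open>Linear independence over GF(2)\<close>

text \<open>Keep + and * on bit as field operations rather than xor and conjunction.\<close>
declare add_bit_eq_xor[simp del] mult_bit_eq_and[simp del]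

lemma bit_add_eq_0_iff: "(a::bit) + b = 0 \<longleftrightarrow> a = b"
  by (cases a; cases b) simp_all

lemma gf2_lin_indepD:
  "gf2_lin_indep v I \<Longrightarrow> (\<And>r. (\<Sum>x\<in>I. c x * v x r) = 0) \<Longrightarrow> x \<in> I \<Longrightarrow> c x = 0"
  by (simp add: gf2_lin_indep_def)

lemma gf2_lin_indep_cong:
  "(\<And>x. x \<in> I \<Longrightarrow> v x = v' x) \<Longrightarrow> gf2_lin_indep v I \<longleftrightarrow> gf2_lin_indep v' I"
  unfolding gf2_lin_indep_def by (simp cong: sum.cong)

lemma gf2_lin_indep_image:
  assumes "inj_on h I"
  shows "gf2_lin_indep v (h ` I) \<longleftrightarrow> gf2_lin_indep (\<lambda>x. v (h x)) I"
proof -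
  have sum_image: "(\<Sum>y\<in>h ` I. c y * v y r) = (\<Sum>x\<in>I. c (h x) * v (h x) r)" for c r
    using sum.reindex[OF assms, of "\<lambda>y. c y * v y r"] by simp
  show ?thesis
  proof
    assume indep: "gf2_lin_indep v (h ` I)"
    show "gf2_lin_indep (\<lambda>x. v (h x)) I" unfolding gf2_lin_indep_def
    proof (intro allI impI ballI)
      fix c x assume zero: "\<forall>r. (\<Sum>x\<in>I. c x * v (h x) r) = 0" and x: "x \<in> I"
      have "\<And>r. (\<Sum>y\<in>h ` I. c (inv_into I h y) * v y r) = 0"
        using zero assms by (simp add: sum_image inv_into_f_f cong: sum.cong)
      from gf2_lin_indepD[OF indep this, of "h x"] x assms show "c x = 0"
        by (simp add: inv_into_f_f)
    qed
  next
    assume "gf2_lin_indep (\<lambda>x. v (h x)) I"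
    then show "gf2_lin_indep v (h ` I)"
      unfolding gf2_lin_indep_def by (auto simp: sum_image)
  qed
qed

lemma gf2_lin_indep_units:
  assumes "finite S" "\<And>w. w \<in> S \<Longrightarrow> v (t w) = (\<lambda>r. if r = w then 1 else 0)"
  shows "gf2_lin_indep v (t ` S)"
proof -
  have inj: "inj_on t S"
    using assms(2) by (intro inj_onI) (metis one_neq_zero)
  have "gf2_lin_indep (\<lambda>w. v (t w)) S" unfolding gf2_lin_indep_def
  proof (intro allI impI ballI)
    fix c w assume zero: "\<forall>r. (\<Sum>u\<in>S. c u * v (t u) r) = 0" and w: "w \<in> S"
    have "(\<Sum>u\<in>S. c u * v (t u) w) = (\<Sum>u\<in>S. if w = u then c u else 0)"
      using assms(2) by (intro sum.cong) auto
    also have "\<dots> = c w" using assms(1) w by (simp add: sum.delta)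
    finally show "c w = 0" using zero by simp
  qed
  then show ?thesis using gf2_lin_indep_image[OF inj] by blast
qed

lemma gf2_lin_indep_insert_row:
  assumes "gf2_lin_indep v I" "finite I" "\<forall>z\<in>I. v z row = 0" "v x row = 1" "x \<notin> I"
  shows "gf2_lin_indep v (insert x I)"
  unfolding gf2_lin_indep_def
proof (intro allI impI)
  fix c assume zero: "\<forall>r. (\<Sum>y\<in>insert x I. c y * v y r) = 0"
  have split: "\<And>r. (\<Sum>y\<in>insert x I. c y * v y r) = c x * v x r + (\<Sum>y\<in>I. c y * v y r)"
    using assms(2,5) by simp
  have cx: "c x = 0" using zero split[of row] assms(3,4) by simp
  then have "\<forall>y\<in>I. c y = 0" using zero split gf2_lin_indepD[OF assms(1)] by simp
  then show "\<forall>y\<in>insert x I. c y = 0" using cx by simp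
qed

lemma not_gf2_lin_indep_insert_sum:
  assumes "y \<notin> I" "S \<subseteq> I" "finite I" "\<And>r. v y r = (\<Sum>z\<in>S. v z r)"
  shows "\<not> gf2_lin_indep v (insert y I)"
proof
  assume indep: "gf2_lin_indep v (insert y I)"
  let ?c = "\<lambda>z. if z = y \<or> z \<in> S then 1 else (0::bit)"
  have "(\<Sum>z\<in>insert y I. ?c z * v z r) = 0" for r
  proof -
    have "(\<Sum>z\<in>insert y I. ?c z * v z r) = v y r + (\<Sum>z\<in>I. if z \<in> S then v z r else 0)"
      using assms(1,3) by (auto intro: sum.cong)
    also have "(\<Sum>z\<in>I. if z \<in> S then v z r else 0) = (\<Sum>z\<in>S. v z r)"
      using assms(2,3) by (simp add: sum.inter_restrict[symmetric] Int_absorb1)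
    finally show ?thesis using assms(4) by simp
  qed
  from gf2_lin_indepD[OF indep this, of y] show False by simp
qed

lemma gf2_lin_indep_coordinates:
  assumes "finite I" "finite V"
    and base: "\<And>d. (\<forall>r. (\<Sum>w\<in>V. d w * b w r) = 0) \<Longrightarrow> \<forall>w\<in>V. d w = 0"
    and coords: "\<And>x r. x \<in> I \<Longrightarrow> v x r = (\<Sum>w\<in>V. co x w * b w r)"
    and supp: "\<And>x w. x \<in> I \<Longrightarrow> w \<notin> V \<Longrightarrow> co x w = 0"
  shows "gf2_lin_indep v I \<longleftrightarrow> gf2_lin_indep co I"
proof -
  have expand: "(\<Sum>x\<in>I. c x * v x r) = (\<Sum>w\<in>V. (\<Sum>x\<in>I. c x * co x w) * b w r)" for c r
  proof -
    have "(\<Sum>x\<in>I. c x * v x r) = (\<Sum>x\<in>I. \<Sum>w\<in>V. c x * co x w * b w r)"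
      using coords by (intro sum.cong) (auto simp: sum_distrib_left mult.assoc)
    also have "\<dots> = (\<Sum>w\<in>V. (\<Sum>x\<in>I. c x * co x w) * b w r)"
      by (subst sum.swap) (simp add: sum_distrib_right)
    finally show ?thesis .
  qed
  have outside: "(\<Sum>x\<in>I. c x * co x w) = 0" if "w \<notin> V" for c w
    using supp that by simp
  have "(\<forall>r. (\<Sum>x\<in>I. c x * v x r) = 0) \<longleftrightarrow> (\<forall>w. (\<Sum>x\<in>I. c x * co x w) = 0)" for c
    using base[of "\<lambda>w. \<Sum>x\<in>I. c x * co x w"] outside[of _ c] by (auto simp: expand)
  then show ?thesis unfolding gf2_lin_indep_def by blast
qed

section \<open>Matroids and the cycle space\<close>

lemma matroid_mrank_le_iff:
  assumes "matroid U indep"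
  shows "mrank indep \<le> n \<longleftrightarrow> (\<forall>I. indep I \<longrightarrow> card I \<le> n)"
proof -
  have "{card I | I. indep I} \<subseteq> card ` Pow U"
    using assms by (auto simp: matroid_def)
  then have fin: "finite {card I | I. indep I}"
    using assms unfolding matroid_def by (meson finite_Pow_iff finite_imageI finite_subset)
  have "{card I | I. indep I} \<noteq> {}"
    using assms by (auto simp: matroid_def)
  then have "mrank indep \<le> n \<longleftrightarrow> (\<forall>k\<in>{card I | I. indep I}. k \<le> n)"
    unfolding mrank_def by (rule Max_le_iff[OF fin])
  then show ?thesis by blast
qed

lemma matroid_card_indep_le_maximal:
  assumes "matroid U indep" "indep T" "\<And>x. x \<in> U - T \<Longrightarrow> \<not> indep (insert x T)" "indep I"
  shows "card I \<le> card T"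
proof (rule ccontr)
  assume "\<not> card I \<le> card T"
  then have "card T < card I" by simp
  with assms(1,2,4) obtain x where "x \<in> I - T" "indep (insert x T)"
    unfolding matroid_def by blast
  moreover have "I \<subseteq> U" using assms(1,4) by (simp add: matroid_def)
  ultimately show False using assms(3) by blast
qed

lemma matroid_dependent_contains_circuit:
  assumes "matroid U indep" "X \<subseteq> U" "\<not> indep X"
  shows "\<exists>C\<subseteq>X. circuit U indep C"
proof -
  obtain C where C: "C \<subseteq> X" "\<not> indep C" and minimal: "\<And>D. D \<subseteq> X \<Longrightarrow> \<not> indep D \<Longrightarrow> card C \<le> card D"
    using ex_has_least_nat[of "\<lambda>D. D \<subseteq> X \<and> \<not> indep D" X card] assms(3) by auto
  have fin: "finite C"
    using assms(1,2) C(1) unfolding matroid_def by (meson finite_subset)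
  have "indep (C - {x})" if "x \<in> C" for x
  proof (rule ccontr)
    assume "\<not> indep (C - {x})"
    then have "card C \<le> card (C - {x})" using minimal C(1) by blast
    then show False using card_Diff1_less[OF fin that] by simp
  qed
  then show ?thesis using C assms(2) unfolding circuit_def by blast
qed

text \<open>Over GF(2) the only vanishing combination of a circuit is the full one.\<close>
lemma circuit_sum_zero:
  assumes rep: "\<forall>I. indep I \<longleftrightarrow> col_indep U vec I" and "finite U" and C: "circuit U indep C"
  shows "(\<Sum>x\<in>C. vec x r) = 0"
proof -
  have CU: "C \<subseteq> U" and dep: "\<not> indep C" and minimal: "\<And>x. x \<in> C \<Longrightarrow> indep (C - {x})"
    using C unfolding circuit_def by auto
  have fin: "finite C" using CU assms(2) finite_subset by blast
  from dep CU rep obtain c x0 where zero: "\<forall>r. (\<Sum>x\<in>C. c x * vec x r) = 0"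
    and x0: "x0 \<in> C" "c x0 \<noteq> 0"
    unfolding col_indep_def gf2_lin_indep_def by blast
  have "c y = 1" if y: "y \<in> C" for y
  proof (rule ccontr)
    assume "c y \<noteq> 1"
    then have cy: "c y = 0" by simp
    have "gf2_lin_indep vec (C - {y})" using minimal[OF y] rep by (simp add: col_indep_def)
    moreover have "(\<Sum>x\<in>C - {y}. c x * vec x r) = 0" for r
      using zero fin y cy by (simp add: sum.remove)
    ultimately have "c x0 = 0"
      using x0 cy gf2_lin_indepD[of vec "C - {y}" c x0] by (cases "x0 = y") auto
    then show False using x0 by simp
  qed
  then have "(\<Sum>x\<in>C. vec x r) = (\<Sum>x\<in>C. c x * vec x r)" by (intro sum.cong) auto
  then show ?thesis using zero by simp
qed

lemma cycle_space_iff_sum_zero: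
  assumes mat: "matroid U indep" and rep: "\<forall>I. indep I \<longleftrightarrow> col_indep U vec I"
  shows "X \<in> cycle_space U indep \<longleftrightarrow> X \<subseteq> U \<and> (\<forall>r. (\<Sum>x\<in>X. vec x r) = 0)"
proof
  have fU: "finite U" using mat by (simp add: matroid_def)
  assume "X \<in> cycle_space U indep"
  then obtain F where F: "X = \<Union>F" "F \<subseteq> {C. circuit U indep C}" "disjoint F"
    unfolding cycle_space_def by blast
  have sub: "C \<subseteq> U" if "C \<in> F" for C using F(2) that by (auto simp: circuit_def)
  have fin: "finite F" "\<forall>C\<in>F. finite C"
    using sub fU by (meson Pow_iff finite_Pow_iff finite_subset subsetI)+
  have "(\<Sum>x\<in>X. vec x r) = (\<Sum>C\<in>F. \<Sum>x\<in>C. vec x r)" for r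
    unfolding F(1) using F(3) fin by (subst sum.Union_disjoint) (auto simp: disjoint_def)
  also have "\<dots> r = 0" for r
    using circuit_sum_zero[OF rep fU] F(2) by (intro sum.neutral) auto
  finally show "X \<subseteq> U \<and> (\<forall>r. (\<Sum>x\<in>X. vec x r) = 0)" using F(1) sub by auto
next
  assume "X \<subseteq> U \<and> (\<forall>r. (\<Sum>x\<in>X. vec x r) = 0)"
  then show "X \<in> cycle_space U indep"
  proof (induction X rule: measure_induct_rule[where f = card])
    case (less X)
    have fX: "finite X" using less.prems mat finite_subset by (auto simp: matroid_def)
    show ?case
    proof (cases "X = {}")
      case True
      then show ?thesis unfolding cycle_space_def by (auto intro: exI[of _ "{}"])
    next
      case False
      then have "\<not> gf2_lin_indep vec X"
        using less.prems unfolding gf2_lin_indep_def by (auto intro!: exI[of _ "\<lambda>_. 1"])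
      then have "\<not> indep X" using rep by (simp add: col_indep_def)
      then obtain C where C: "C \<subseteq> X" "circuit U indep C"
        using matroid_dependent_contains_circuit[OF mat] less.prems by blast
      have "C \<noteq> {}" using C(2) mat by (auto simp: circuit_def matroid_def)
      then have smaller: "card (X - C) < card X"
        using C(1) fX by (intro psubset_card_mono) auto
      have "(\<Sum>x\<in>X - C. vec x r) = 0" for r
      proof -
        have "(\<Sum>x\<in>X. vec x r) = (\<Sum>x\<in>X - C. vec x r) + (\<Sum>x\<in>C. vec x r)"
          using sum.subset_diff[OF C(1) fX] .
        then show ?thesis
          using less.prems circuit_sum_zero[OF rep _ C(2)] mat by (simp add: matroid_def)
      qed
      then have "X - C \<in> cycle_space U indep" using less.IH[OF smaller] less.prems by blast
      then obtain F where F: "X - C = \<Union>F" "F \<subseteq> {C. circuit U indep C}" "disjoint F"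
        unfolding cycle_space_def by blast
      have "X = \<Union>(insert C F)" "insert C F \<subseteq> {C. circuit U indep C}" "disjoint (insert C F)"
        using F C \<open>C \<noteq> {}\<close> by (auto simp: disjoint_def)
      then show ?thesis unfolding cycle_space_def by blast
    qed
  qed
qed

section \<open>Standard form of a binary representation\<close>

lemma gf2_lin_indep_insert_combination:
  assumes "gf2_lin_indep v T" "finite T" "x \<notin> T" "\<not> gf2_lin_indep v (insert x T)"
  shows "\<exists>c. \<forall>r. v x r = (\<Sum>z\<in>T. c z * v z r)"
proof -
  obtain c y where zero: "\<forall>r. (\<Sum>z\<in>insert x T. c z * v z r) = 0"
    and y: "y \<in> insert x T" "c y \<noteq> 0"
    using assms(4) unfolding gf2_lin_indep_def by blast
  have split: "(\<Sum>z\<in>insert x T. c z * v z r) = c x * v x r + (\<Sum>z\<in>T. c z * v z r)" for r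
    using assms(2,3) by simp
  have "c x = 1"
  proof (rule ccontr)
    assume "c x \<noteq> 1"
    then have "c x = 0" by simp
    then have "\<forall>z\<in>T. c z = 0" using zero split gf2_lin_indepD[OF assms(1)] by simp
    then show False using y \<open>c x = 0\<close> by auto
  qed
  then have "v x r = (\<Sum>z\<in>T. c z * v z r)" for r
    using zero split[of r] by (simp add: bit_add_eq_0_iff)
  then show ?thesis by blast
qed

text \<open>The representation is the matrix (I | A) with the identity part on the columns t ` V.\<close>
definition standard_form :: "'a set \<Rightarrow> ('a \<Rightarrow> 'v \<Rightarrow> bit) \<Rightarrow> ('v \<Rightarrow> 'a) \<Rightarrow> 'v set \<Rightarrow> bool" where
  "standard_form U vec t V \<longleftrightarrow>
     t ` V \<subseteq> U \<and> (\<forall>w\<in>V. vec (t w) = (\<lambda>r. if r = w then 1 else 0)) \<and>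
     (\<forall>x\<in>U. \<forall>r. r \<notin> V \<longrightarrow> vec x r = 0)"

lemma standard_form_inj:
  "standard_form U vec t V \<Longrightarrow> inj_on t V"
  unfolding standard_form_def by (intro inj_onI) (metis one_neq_zero)

lemma standard_form_sum_units:
  assumes std: "standard_form U vec t V" and "finite V" "x \<in> U"
  shows "vec x r = (\<Sum>z\<in>t ` {w\<in>V. vec x w = 1}. vec z r)"
proof -
  let ?S = "{w\<in>V. vec x w = 1}"
  have "(\<Sum>z\<in>t ` ?S. vec z r) = (\<Sum>w\<in>?S. vec (t w) r)"
    using standard_form_inj[OF std] by (simp add: sum.reindex inj_on_subset)
  also have "\<dots> = (\<Sum>w\<in>?S. if r = w then 1 else 0)"
    using std by (intro sum.cong) (auto simp: standard_form_def)
  also have "\<dots> = (if r \<in> ?S then 1 else 0)"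
    using assms(2) by (simp add: sum.delta)
  also have "\<dots> = vec x r"
    using std assms(3) by (cases "r \<in> V"; cases "vec x r") (auto simp: standard_form_def)
  finally show ?thesis by simp
qed

lemma standard_form_insert_dependent:
  assumes rep: "\<forall>I. indep I \<longleftrightarrow> col_indep U vec I" and std: "standard_form U vec t V"
    and "finite I" "finite V" "x \<in> U" "x \<notin> I" "t ` {w\<in>V. vec x w = 1} \<subseteq> I"
  shows "\<not> indep (insert x I)"
proof -
  have "\<And>r. vec x r = (\<Sum>z\<in>t ` {w\<in>V. vec x w = 1}. vec z r)"
    using standard_form_sum_units[OF std assms(4,5)] .
  from not_gf2_lin_indep_insert_sum[where v = vec, OF assms(6,7,3) this] show ?thesis
    using rep by (simp add: col_indep_def)
qed

lemma standard_form_card_indep_le: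
  assumes mat: "matroid U indep" and rep: "\<forall>I. indep I \<longleftrightarrow> col_indep U vec I"
    and std: "standard_form U vec t V" and "finite V" "indep I"
  shows "card I \<le> card V"
proof -
  have "gf2_lin_indep vec (t ` V)"
    using std \<open>finite V\<close> by (intro gf2_lin_indep_units) (auto simp: standard_form_def)
  then have "indep (t ` V)" using rep std by (simp add: col_indep_def standard_form_def)
  moreover have "\<not> indep (insert x (t ` V))" if "x \<in> U - t ` V" for x
    using standard_form_insert_dependent[OF rep std] that \<open>finite V\<close> by blast
  ultimately have "card I \<le> card (t ` V)"
    using matroid_card_indep_le_maximal[OF mat] \<open>indep I\<close> by blast
  then show ?thesis using card_image[OF standard_form_inj[OF std]] by simp
qed

lemma binary_standard_form:
  assumes rep: "\<forall>I. indep I \<longleftrightarrow> col_indep U vec I" and "finite U" "finite V"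
    and inj: "inj_on t V" and tV: "t ` V \<subseteq> U" and basis: "indep (t ` V)"
    and maximal: "\<And>x. x \<in> U - t ` V \<Longrightarrow> \<not> indep (insert x (t ` V))"
  shows "\<exists>vec' :: 'a \<Rightarrow> 'v \<Rightarrow> bit. (\<forall>I. indep I \<longleftrightarrow> col_indep U vec' I) \<and> standard_form U vec' t V"
proof -
  define coords :: "'a \<Rightarrow> ('v \<Rightarrow> bit) \<Rightarrow> bool" where
    "coords x c \<longleftrightarrow> (\<forall>w. w \<notin> V \<longrightarrow> c w = 0) \<and> (\<forall>r. vec x r = (\<Sum>w\<in>V. c w * vec (t w) r))" for x c
  have T: "gf2_lin_indep vec (t ` V)" using basis rep by (simp add: col_indep_def)
  then have base: "\<forall>w\<in>V. d w = 0" if "\<forall>r. (\<Sum>w\<in>V. d w * vec (t w) r) = 0" for d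
    using that gf2_lin_indep_image[OF inj] unfolding gf2_lin_indep_def by blast
  have unique: "c = c'" if "coords x c" "coords x c'" for x c c'
  proof -
    have "(\<Sum>w\<in>V. (c w + c' w) * vec (t w) r) = 0" for r
      using that by (simp add: coords_def distrib_right sum.distrib)
    then have "\<forall>w\<in>V. c w = c' w"
      using base[of "\<lambda>w. c w + c' w"] by (simp add: bit_add_eq_0_iff)
    then show ?thesis using that unfolding coords_def fun_eq_iff by metis
  qed
  have exists: "\<exists>c. coords x c" if xU: "x \<in> U" for x
  proof -
    obtain c where "\<forall>r. vec x r = (\<Sum>w\<in>V. c w * vec (t w) r)"
    proof (cases "x \<in> t ` V")
      case True
      then obtain w0 where "w0 \<in> V" "x = t w0" by auto
      then show ?thesis
        using \<open>finite V\<close> by (intro that[of "\<lambda>w. if w = w0 then 1 else 0"]) (simp add: of_bool_def[symmetric])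
    next
      case False
      then have "\<not> gf2_lin_indep vec (insert x (t ` V))"
        using maximal[of x] xU tV rep by (simp add: col_indep_def)
      then obtain c where "\<forall>r. vec x r = (\<Sum>z\<in>t ` V. c z * vec z r)"
        using gf2_lin_indep_insert_combination[OF T] False \<open>finite V\<close> by blast
      then show ?thesis using that[of "\<lambda>w. c (t w)"] by (simp add: sum.reindex[OF inj])
    qed
    then have "coords x (\<lambda>w. if w \<in> V then c w else 0)"
      unfolding coords_def by simp
    then show ?thesis by blast
  qed
  define vec' where "vec' x = (SOME c. coords x c)" for x
  have vec': "coords x (vec' x)" if "x \<in> U" for x
    unfolding vec'_def using exists[OF that] by (rule someI_ex)
  have "vec' (t w) = (\<lambda>r. if r = w then 1 else 0)" if "w \<in> V" for w
  proof (rule unique)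
    show "coords (t w) (vec' (t w))" using vec' tV that by blast
    show "coords (t w) (\<lambda>r. if r = w then 1 else 0)"
      using that \<open>finite V\<close> by (auto simp: coords_def of_bool_def[symmetric])
  qed
  then have std: "standard_form U vec' t V"
    using tV vec' by (simp add: standard_form_def coords_def)
  have "indep I \<longleftrightarrow> col_indep U vec' I" for I
  proof (cases "I \<subseteq> U")
    case True
    then have "finite I" using \<open>finite U\<close> finite_subset by blast
    then have "gf2_lin_indep vec I \<longleftrightarrow> gf2_lin_indep vec' I"
      using True vec' \<open>finite V\<close> base by (intro gf2_lin_indep_coordinates) (auto simp: coords_def)
    then show ?thesis using rep by (simp add: col_indep_def)
  qed (use rep in \<open>simp add: col_indep_def\<close>)
  then show ?thesis using std by blast
qed

section \<open>Sheltering matroids\<close>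

lemma sheltering_matroid: "sheltering U indep \<Omega> \<Longrightarrow> matroid U indep"
  and sheltering_partition_on: "sheltering U indep \<Omega> \<Longrightarrow> partition_on U \<Omega>"
  by (simp_all add: sheltering_def)

lemma shelteringD:
  assumes "sheltering U indep \<Omega>" "indep I" "\<forall>\<omega>'\<in>\<Omega>. card (I \<inter> \<omega>') \<le> 1"
    and "\<omega> \<in> \<Omega>" "\<omega> \<inter> I = {}" "x \<in> \<omega>" "y \<in> \<omega>" "x \<noteq> y"
  shows "indep (insert x I) \<or> indep (insert y I)"
  using assms unfolding sheltering_def by blast

lemma partition_on_disjoint:
  "partition_on U \<Omega> \<Longrightarrow> \<omega>1 \<in> \<Omega> \<Longrightarrow> \<omega>2 \<in> \<Omega> \<Longrightarrow> \<omega>1 \<noteq> \<omega>2 \<Longrightarrow> \<omega>1 \<inter> \<omega>2 = {}"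
  unfolding partition_on_def disjoint_def by blast

lemma sheltering_transversal:
  assumes sh: "sheltering U indep \<Omega>" and two: "\<forall>\<omega>\<in>\<Omega>. 2 \<le> card \<omega>"
    and "finite F" "F \<subseteq> \<Omega>"
  shows "\<exists>I. indep I \<and> I \<subseteq> \<Union>F \<and> (\<forall>\<omega>\<in>F. card (I \<inter> \<omega>) = 1)"
  using \<open>finite F\<close> \<open>F \<subseteq> \<Omega>\<close>
proof (induction F rule: finite_induct)
  case empty
  then show ?case using sheltering_matroid[OF sh] by (simp add: matroid_def)
next
  case (insert \<omega> F)
  obtain I where I: "indep I" "I \<subseteq> \<Union>F" "\<forall>\<omega>'\<in>F. card (I \<inter> \<omega>') = 1"
    using insert by blast
  note disj = partition_on_disjoint[OF sheltering_partition_on[OF sh]]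
  have \<omega>: "\<omega> \<in> \<Omega>" "\<omega> \<inter> \<Union>F = {}" using insert disj by auto
  have "card (I \<inter> \<omega>') \<le> 1" if "\<omega>' \<in> \<Omega>" for \<omega>'
  proof (cases "\<omega>' \<in> F")
    case False
    then have "I \<inter> \<omega>' = {}" using I(2) disj[OF that] insert.prems by blast
    then show ?thesis by simp
  qed (use I(3) in simp)
  moreover obtain x y where xy: "x \<in> \<omega>" "y \<in> \<omega>" "x \<noteq> y"
  proof -
    have "\<not> card \<omega> \<le> Suc 0" using two \<omega>(1) by auto
    then show ?thesis using that card_le_Suc0_iff_eq[of \<omega>] card.infinite[of \<omega>] by fastforce
  qed
  ultimately have "indep (insert x I) \<or> indep (insert y I)"
    using shelteringD[OF sh I(1) _ \<omega>(1) _ xy] I(2) \<omega>(2) by blast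
  then obtain p where p: "p \<in> \<omega>" "indep (insert p I)" using xy by blast
  have "card (insert p I \<inter> \<omega>') = 1" if "\<omega>' \<in> insert \<omega> F" for \<omega>'
  proof (cases "\<omega>' = \<omega>")
    case True
    then have "insert p I \<inter> \<omega>' = {p}" using p I(2) \<omega>(2) by auto
    then show ?thesis by simp
  next
    case False
    then have "insert p I \<inter> \<omega>' = I \<inter> \<omega>'" using p \<omega>(2) that by auto
    then show ?thesis using I(3) False that by simp
  qed
  then show ?case using p I(2) by blast
qed

section \<open>IAS representations\<close>

lemma W_eq_vertex_triples: "W V = (\<Union>w\<in>V. vertex_triple w)"
  unfolding W_def vertex_triple_def by auto

lemma matroid_iso_col_indep:
  assumes "matroid U indep" and iso: "matroid_iso f U indep U' (col_indep U' v)"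
  shows "indep I \<longleftrightarrow> col_indep U (\<lambda>x. v (f x)) I"
proof (cases "I \<subseteq> U")
  case True
  have "inj_on f I" "f ` I \<subseteq> U'"
    using iso True by (auto simp: matroid_iso_def bij_betw_def intro: inj_on_subset)
  then show ?thesis
    using iso True gf2_lin_indep_image[of f I v] by (simp add: matroid_iso_def col_indep_def)
next
  case False
  then show ?thesis using assms(1) by (auto simp: matroid_def col_indep_def)
qed

lemma matroid_iso_inv_into_col_indep:
  assumes "bij_betw h W' U" and rep: "\<forall>I. indep I \<longleftrightarrow> col_indep U vec I"
    and cols: "\<And>l. l \<in> W' \<Longrightarrow> vec' l = vec (h l)"
  shows "matroid_iso (inv_into W' h) U indep W' (col_indep W' vec')"
  unfolding matroid_iso_def
proof (intro conjI allI impI)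
  show bij: "bij_betw (inv_into W' h) U W'" using assms(1) by (rule bij_betw_inv_into)
  fix I assume "I \<subseteq> U"
  define J where "J = inv_into W' h ` I"
  have J: "J \<subseteq> W'" "h ` J = I"
    using bij_betwE[OF bij] image_inv_into_cancel[OF bij_betw_imp_surj_on[OF assms(1)] \<open>I \<subseteq> U\<close>]
      \<open>I \<subseteq> U\<close> unfolding J_def by blast+
  then have "inj_on h J" using assms(1) bij_betw_imp_inj_on inj_on_subset by blast
  have "indep I \<longleftrightarrow> gf2_lin_indep vec (h ` J)" using rep \<open>I \<subseteq> U\<close> J(2) by (simp add: col_indep_def)
  also have "\<dots> \<longleftrightarrow> gf2_lin_indep vec' J"
    using gf2_lin_indep_image[OF \<open>inj_on h J\<close>] gf2_lin_indep_cong[of J vec' "\<lambda>l. vec (h l)"] cols J(1) by auto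
  finally show "indep I \<longleftrightarrow> col_indep W' vec' (inv_into W' h ` I)"
    using J(1) unfolding J_def col_indep_def by simp
qed

lemma ias_col_outside:
  assumes "looped_simple_graph V E" "l \<in> W V" "r \<notin> V"
  shows "ias_col E l r = 0"
proof -
  have "adj_matrix E r w = 0" for w
    using assms(1,3) by (auto simp: looped_simple_graph_def adj_matrix_def)
  then show ?thesis using assms(2,3) by (auto simp: W_def)
qed

lemma ias_col_vertex_triple_sum: "(\<Sum>l\<in>vertex_triple v. ias_col E l r) = 0"
  by (simp add: vertex_triple_def add.assoc[symmetric])

lemma binary_if_ias_representation:
  fixes V :: "nat set"
  assumes mat: "matroid U indep" and part: "partition_on U \<Omega>"
    and G: "looped_simple_graph V E" and iso: "matroid_iso f U indep (W V) (ias_indep V E)"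
    and triples: "(\<lambda>\<omega>. f ` \<omega>) ` \<Omega> = vertex_triple ` V"
  shows "binary U indep \<and> mrank indep \<le> card \<Omega> \<and> (\<forall>\<omega>\<in>\<Omega>. \<omega> \<in> cycle_space U indep)"
proof (intro conjI ballI)
  define vec where "vec x = ias_col E (f x)" for x
  have rep: "\<forall>I. indep I \<longleftrightarrow> col_indep U vec I"
    using matroid_iso_col_indep[OF mat] iso unfolding vec_def ias_indep_def by blast
  then show "binary U indep" unfolding binary_def by blast
  have bij: "bij_betw f U (W V)" using iso by (simp add: matroid_iso_def)
  have fU: "finite U" using mat by (simp add: matroid_def)
  show "mrank indep \<le> card \<Omega>"
  proof -
    define t where "t w = inv_into U f (Phi w)" for w
    have "Phi w \<in> W V" if "w \<in> V" for w using that by (simp add: W_def)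
    then have "t w \<in> U" "f (t w) = Phi w" if "w \<in> V" for w
      using that bij unfolding t_def bij_betw_def by (auto simp: inv_into_into f_inv_into_f)
    then have "standard_form U vec t V"
      using bij bij_betwE ias_col_outside[OF G]
      unfolding standard_form_def vec_def by (fastforce simp: fun_eq_iff)
    moreover have "finite V" using G by (simp add: looped_simple_graph_def)
    ultimately have "mrank indep \<le> card V"
      using standard_form_card_indep_le[OF mat rep] matroid_mrank_le_iff[OF mat] by blast
    also have "card V = card (vertex_triple ` V)"
      by (rule card_image[symmetric]) (auto simp: inj_on_def vertex_triple_def)
    also have "\<dots> \<le> card \<Omega>"
      unfolding triples[symmetric]
      using part fU by (intro card_image_le) (simp add: partition_on_def finite_UnionD)
    finally show ?thesis .
  qed
  fix \<omega> assume "\<omega> \<in> \<Omega>"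
  then have "f ` \<omega> \<in> vertex_triple ` V" unfolding triples[symmetric] by (rule imageI)
  then obtain v where v: "f ` \<omega> = vertex_triple v" by blast
  have "\<omega> \<subseteq> U" using part \<open>\<omega> \<in> \<Omega>\<close> by (auto simp: partition_on_def)
  then have "inj_on f \<omega>" using bij by (auto simp: bij_betw_def intro: inj_on_subset)
  then have "(\<Sum>x\<in>\<omega>. vec x r) = (\<Sum>l\<in>vertex_triple v. ias_col E l r)" for r
    unfolding vec_def v[symmetric] by (simp add: sum.reindex)
  then show "\<omega> \<in> cycle_space U indep"
    using cycle_space_iff_sum_zero[OF mat rep] \<open>\<omega> \<subseteq> U\<close> by (simp add: ias_col_vertex_triple_sum)
qed

section \<open>The graph of a sheltering matroid in standard form\<close>

locale sheltered_standard_form =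
  fixes U :: "'a set" and indep :: "'a set \<Rightarrow> bool" and \<Omega> :: "'a set set"
    and vec :: "'a \<Rightarrow> 'v \<Rightarrow> bit" and V :: "'v set" and t a b :: "'v \<Rightarrow> 'a"
  assumes sheltering: "sheltering U indep \<Omega>"
    and rep: "\<forall>I. indep I \<longleftrightarrow> col_indep U vec I"
    and finite_V: "finite V"
    and standard: "standard_form U vec t V"
    and classes: "bij_betw (\<lambda>w. {t w, a w, b w}) V \<Omega>"
    and distinct: "\<forall>w\<in>V. t w \<noteq> a w \<and> t w \<noteq> b w \<and> a w \<noteq> b w"
    and b_sum: "\<forall>w\<in>V. \<forall>r. vec (b w) r = vec (t w) r + vec (a w) r"
begin

abbreviation triple :: "'v \<Rightarrow> 'a set" where
  "triple w \<equiv> {t w, a w, b w}"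

lemma triple_in: "w \<in> V \<Longrightarrow> triple w \<in> \<Omega>"
  using classes by (rule bij_betw_apply)

lemma triple_subset: "w \<in> V \<Longrightarrow> triple w \<subseteq> U"
  using triple_in sheltering_partition_on[OF sheltering] by (auto simp: partition_on_def)

lemma triple_unique:
  assumes "w \<in> V" "w' \<in> V" "x \<in> triple w" "x \<in> triple w'"
  shows "w = w'"
proof -
  have "triple w = triple w'"
    using partition_on_disjoint[OF sheltering_partition_on[OF sheltering]] triple_in assms by blast
  then show ?thesis using classes assms(1,2) by (auto simp: bij_betw_def dest: inj_onD)
qed

lemma vec_t: "w \<in> V \<Longrightarrow> vec (t w) r = (if r = w then 1 else 0)"
  and vec_outside: "x \<in> U \<Longrightarrow> r \<notin> V \<Longrightarrow> vec x r = 0"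
  using standard by (auto simp: standard_form_def)

lemma inj_t: "inj_on t V"
  using standard by (rule standard_form_inj)

lemma obtain_zero_diagonal:
  assumes "w \<in> V"
  obtains x where "x \<in> {a w, b w}" "vec x w = 0" "\<And>r. r \<noteq> w \<Longrightarrow> vec x r = vec (a w) r"
proof (cases "vec (a w) w = 0")
  case False
  then show ?thesis
    using that[of "b w"] b_sum assms vec_t[OF assms] by simp
qed (use that[of "a w"] in simp)

text \<open>The set I below meets every triple at most once and misses the triple of v, so the
  sheltering axiom applies to it.\<close>
lemma sheltering_alternative:
  assumes u: "u \<in> V" and v: "v \<in> V" and "u \<noteq> v"
    and x: "x \<in> {a u, b u}" "vec x v = 1" and y: "y \<in> {a v, b v}"
  defines "I \<equiv> insert x (t ` (V - {u, v}))"
  shows "indep (insert (t v) I) \<or> indep (insert y I)"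
proof -
  have xU: "x \<in> U" using x(1) triple_subset[OF u] by auto
  have x_notin: "x \<notin> t ` (V - {u, v})"
    using x(2) vec_t by (auto split: if_splits)
  have "gf2_lin_indep vec (t ` (V - {u, v}))"
    using finite_V by (intro gf2_lin_indep_units) (auto simp: vec_t fun_eq_iff)
  then have "gf2_lin_indep vec I"
    unfolding I_def using finite_V x_notin x(2) vec_t
    by (intro gf2_lin_indep_insert_row[where row = v]) auto
  moreover have "I \<subseteq> U" unfolding I_def using xU triple_subset by blast
  ultimately have indep_I: "indep I" using rep by (simp add: col_indep_def)
  have I_triple: "I \<inter> triple w \<subseteq> {if w = u then x else t w}" if w: "w \<in> V" for w
  proof
    fix z assume z: "z \<in> I \<inter> triple w"
    show "z \<in> {if w = u then x else t w}"
    proof (cases "z = x")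
      case True
      then show ?thesis using triple_unique[OF w u] z x(1) by auto
    next
      case False
      then obtain w' where "w' \<in> V - {u, v}" "z = t w'" using z unfolding I_def by auto
      then show ?thesis using triple_unique[OF w, of w' z] z by auto
    qed
  qed
  have "card (I \<inter> \<omega>) \<le> 1" if "\<omega> \<in> \<Omega>" for \<omega>
  proof -
    obtain w where "w \<in> V" "\<omega> = triple w" using classes \<open>\<omega> \<in> \<Omega>\<close> by (auto simp: bij_betw_def)
    then show ?thesis using card_mono[OF _ I_triple] by fastforce
  qed
  moreover have "triple v \<inter> I = {}"
  proof -
    have "t v \<noteq> x" using triple_unique[OF u v, of x] x(1) \<open>u \<noteq> v\<close> by auto
    then have "t v \<notin> I" using inj_t v unfolding I_def by (auto dest: inj_onD)
    then show ?thesis using I_triple[OF v] \<open>u \<noteq> v\<close> by auto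
  qed
  moreover have "t v \<noteq> y" using distinct v y by auto
  ultimately show ?thesis
    using shelteringD[OF sheltering indep_I _ triple_in[OF v]] y by blast
qed

text \<open>The heart of the argument: the off-diagonal part of the matrix (a w) is symmetric.
  Otherwise t v and a suitable element of the class of v would both be spanned by an
  independent set to which the sheltering axiom applies.\<close>
lemma a_zero_imp_zero:
  assumes u: "u \<in> V" and v: "v \<in> V" and "u \<noteq> v" and "vec (a v) u = 0"
  shows "vec (a u) v = 0"
proof (rule ccontr)
  assume "vec (a u) v \<noteq> 0"
  obtain x where x: "x \<in> {a u, b u}" "vec x u = 0" and x_agree: "vec x v = vec (a u) v"
    using obtain_zero_diagonal[OF u] \<open>u \<noteq> v\<close> by blast
  with \<open>vec (a u) v \<noteq> 0\<close> have x_v: "vec x v = 1" by simp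
  obtain y where y: "y \<in> {a v, b v}" "vec y v = 0" and y_agree: "vec y u = vec (a v) u"
    using obtain_zero_diagonal[OF v] \<open>u \<noteq> v\<close> by blast
  with \<open>vec (a v) u = 0\<close> have y_u: "vec y u = 0" by simp
  define I where "I = insert x (t ` (V - {u, v}))"
  have fin: "finite I" using finite_V unfolding I_def by simp
  have xU: "x \<in> U" and yU: "y \<in> U" using x(1) y(1) triple_subset[OF u] triple_subset[OF v] by auto
  have x_notin: "x \<notin> t ` S" if "S \<subseteq> V - {v}" for S
  proof
    assume "x \<in> t ` S"
    then obtain w where "w \<in> S" "x = t w" by blast
    then show False using that x_v vec_t[of w v] by (auto split: if_splits)
  qed
  have not_in_I: "z \<notin> I" if "z \<in> triple v" for z
  proof
    assume "z \<in> I"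
    then consider "z = x" | w where "w \<in> V - {u, v}" "z = t w" unfolding I_def by blast
    then show False
    proof cases
      case 1
      then show False using triple_unique[OF u v, of z] x(1) that \<open>u \<noteq> v\<close> by auto
    next
      case (2 w)
      then show False using triple_unique[OF _ v, of w z] that by auto
    qed
  qed
  have "\<not> indep (insert y I)"
  proof (rule standard_form_insert_dependent[OF rep standard fin finite_V yU])
    show "y \<notin> I" using not_in_I y(1) by auto
    show "t ` {w \<in> V. vec y w = 1} \<subseteq> I" using y(2) y_u unfolding I_def by auto
  qed
  moreover have "\<not> indep (insert (t v) I)"
  proof -
    define S where "S = {w \<in> V. vec x w = 1} - {v}"
    have supp: "{w \<in> V. vec x w = 1} = insert v S" using v x_v unfolding S_def by auto
    have tv: "t v \<notin> t ` S" using inj_t v unfolding S_def by (auto dest: inj_onD)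
    have "finite S" using finite_V unfolding S_def by simp
    have "vec x r = (\<Sum>z\<in>t ` insert v S. vec z r)" for r
      using standard_form_sum_units[OF standard finite_V xU] supp by simp
    also have "(\<Sum>z\<in>t ` insert v S. vec z r) = vec (t v) r + (\<Sum>z\<in>t ` S. vec z r)" for r
      using \<open>finite S\<close> tv by simp
    finally have expansion: "vec x r = vec (t v) r + (\<Sum>z\<in>t ` S. vec z r)" for r .
    have "x \<notin> t ` S" using x_notin unfolding S_def by blast
    then have sum: "vec (t v) r = (\<Sum>z\<in>insert x (t ` S). vec z r)" for r
      using \<open>finite S\<close> expansion[of r] by (simp add: add.assoc)
    have sub: "insert x (t ` S) \<subseteq> I" using x(2) unfolding S_def I_def by auto
    have "\<not> gf2_lin_indep vec (insert (t v) I)"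
      using not_gf2_lin_indep_insert_sum[where v = vec, OF not_in_I[of "t v"] sub fin sum] by simp
    then show ?thesis using rep by (simp add: col_indep_def)
  qed
  ultimately show False
    using sheltering_alternative[OF u v \<open>u \<noteq> v\<close> x(1) x_v y(1)] unfolding I_def by blast
qed

lemma a_symmetric:
  assumes "u \<in> V" "v \<in> V"
  shows "vec (a v) u = vec (a u) v"
proof (cases "u = v")
  case False
  then show ?thesis
    using a_zero_imp_zero[OF assms] a_zero_imp_zero[OF assms(2,1)] bit_not_zero_iff by metis
qed simp

definition edges :: "'v set set" where
  "edges = {{u, w} | u w. u \<in> V \<and> w \<in> V \<and> vec (a w) u = 1}"

lemma looped_simple_graph_edges: "looped_simple_graph V edges"
  unfolding looped_simple_graph_def edges_def using finite_V by (auto simp: card_insert_if split: if_splits)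

lemma adj_matrix_edges:
  assumes w: "w \<in> V"
  shows "adj_matrix edges u w = vec (a w) u"
proof (cases "u \<in> V")
  case False
  then have "{u, w} \<notin> edges" unfolding edges_def by (auto simp: doubleton_eq_iff)
  moreover have "vec (a w) u = 0" using vec_outside False triple_subset[OF w] by simp
  ultimately show ?thesis by (simp add: adj_matrix_def)
next
  case True
  have "{u, w} \<in> edges \<longleftrightarrow> vec (a w) u = 1"
    using True w a_symmetric[OF True w] unfolding edges_def by (auto simp: doubleton_eq_iff)
  then show ?thesis by (cases "vec (a w) u") (simp_all add: adj_matrix_def)
qed

definition element_of_label :: "'v wlabel \<Rightarrow> 'a" where
  "element_of_label l = (case l of Phi w \<Rightarrow> t w | Chi w \<Rightarrow> a w | Psi w \<Rightarrow> b w)"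

lemma element_of_label_vertex_triple: "element_of_label ` vertex_triple w = triple w"
  unfolding vertex_triple_def element_of_label_def by simp

lemma ias_col_edges:
  assumes "l \<in> W V"
  shows "ias_col edges l = vec (element_of_label l)"
proof -
  obtain w where w: "w \<in> V" "l \<in> vertex_triple w" using assms W_eq_vertex_triples[of V] by auto
  then show ?thesis
    using adj_matrix_edges[OF w(1)] vec_t[OF w(1)] b_sum w(1)
    by (auto simp: vertex_triple_def element_of_label_def fun_eq_iff add.commute)
qed

lemma bij_betw_element_of_label: "bij_betw element_of_label (W V) U"
proof (rule bij_betw_imageI)
  show "inj_on element_of_label (W V)"
  proof (rule inj_onI)
    fix l1 l2 assume "l1 \<in> W V" "l2 \<in> W V" and eq: "element_of_label l1 = element_of_label l2"
    then obtain w1 w2 where w: "w1 \<in> V" "l1 \<in> vertex_triple w1" "w2 \<in> V" "l2 \<in> vertex_triple w2"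
      using W_eq_vertex_triples[of V] by auto
    then have "w1 = w2"
      using triple_unique[of w1 w2 "element_of_label l1"] eq element_of_label_vertex_triple by blast
    then show "l1 = l2"
      using w eq distinct by (auto simp: vertex_triple_def element_of_label_def)
  qed
  have "U = \<Union>\<Omega>" using sheltering_partition_on[OF sheltering] by (simp add: partition_on_def)
  also have "\<dots> = (\<Union>w\<in>V. triple w)" using classes by (simp add: bij_betw_def)
  finally show "element_of_label ` W V = U"
    by (simp add: W_eq_vertex_triples image_UN element_of_label_vertex_triple)
qed

lemma ias_representation:
  "\<exists>E f. looped_simple_graph V E \<and> matroid_iso f U indep (W V) (ias_indep V E) \<and>
     (\<lambda>\<omega>. f ` \<omega>) ` \<Omega> = vertex_triple ` V"
proof (intro exI conjI)
  let ?f = "inv_into (W V) element_of_label"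
  show "looped_simple_graph V edges" by (rule looped_simple_graph_edges)
  show "matroid_iso ?f U indep (W V) (ias_indep V edges)"
    unfolding ias_indep_def
    by (rule matroid_iso_inv_into_col_indep[OF bij_betw_element_of_label rep ias_col_edges])
  have "?f ` triple w = vertex_triple w" if "w \<in> V" for w
    using inv_into_image_cancel[OF bij_betw_imp_inj_on[OF bij_betw_element_of_label], of "vertex_triple w"]
      that W_eq_vertex_triples[of V] element_of_label_vertex_triple by auto
  then show "(\<lambda>\<omega>. ?f ` \<omega>) ` \<Omega> = vertex_triple ` V"
    using classes by (auto simp: bij_betw_def image_image)
qed

end

lemma three_element_set_with_point:
  assumes "card \<omega> = 3" "x \<in> \<omega>"
  shows "\<exists>y z. \<omega> = {x, y, z} \<and> x \<noteq> y \<and> x \<noteq> z \<and> y \<noteq> z"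
proof -
  obtain p q r where \<omega>: "\<omega> = {p, q, r}" "p \<noteq> q" "p \<noteq> r" "q \<noteq> r"
    using assms(1) by (auto simp: card_3_iff)
  with assms(2) consider "x = p" | "x = q" | "x = r" by blast
  then show ?thesis
  proof cases
    case 1
    then show ?thesis using \<omega> by blast
  next
    case 2
    then have "\<omega> = {x, p, r}" using \<omega>(1) by blast
    then show ?thesis using \<omega> 2 by blast
  next
    case 3
    then have "\<omega> = {x, p, q}" using \<omega>(1) by blast
    then show ?thesis using \<omega> 3 by blast
  qed
qed

lemma ias_representation_if_binary:
  assumes sh3: "three_sheltering U indep \<Omega>" and "binary U indep"
    and rank: "mrank indep \<le> card \<Omega>" and cycles: "\<forall>\<omega>\<in>\<Omega>. \<omega> \<in> cycle_space U indep"
  shows "\<exists>(V :: nat set) E f. looped_simple_graph V E \<and>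
           matroid_iso f U indep (W V) (ias_indep V E) \<and> (\<lambda>\<omega>. f ` \<omega>) ` \<Omega> = vertex_triple ` V"
proof -
  have sh: "sheltering U indep \<Omega>" and three: "\<forall>\<omega>\<in>\<Omega>. card \<omega> = 3"
    using sh3 by (auto simp: three_sheltering_def)
  have mat: "matroid U indep" and part: "partition_on U \<Omega>"
    using sheltering_matroid[OF sh] sheltering_partition_on[OF sh] .
  have fU: "finite U" using mat by (simp add: matroid_def)
  have U: "U = \<Union>\<Omega>" using part by (simp add: partition_on_def)
  then have fin_\<Omega>: "finite \<Omega>" using fU by (simp add: finite_UnionD)
  obtain T where T: "indep T" "T \<subseteq> U" "\<forall>\<omega>\<in>\<Omega>. card (T \<inter> \<omega>) = 1"
    using sheltering_transversal[OF sh _ fin_\<Omega> subset_refl] three U by auto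
  obtain vec :: "'a \<Rightarrow> nat \<Rightarrow> bit" where rep: "\<forall>I. indep I \<longleftrightarrow> col_indep U vec I"
    using \<open>binary U indep\<close> by (auto simp: binary_def)
  define V where "V = {..<card \<Omega>}"
  obtain g where g: "bij_betw g V \<Omega>"
    unfolding V_def lessThan_atLeast0 using ex_bij_betw_nat_finite[OF fin_\<Omega>] by blast
  have "\<forall>w\<in>V. \<exists>p. g w = {fst p, fst (snd p), snd (snd p)} \<and> T \<inter> g w = {fst p} \<and>
      fst p \<noteq> fst (snd p) \<and> fst p \<noteq> snd (snd p) \<and> fst (snd p) \<noteq> snd (snd p)"
  proof
    fix w assume "w \<in> V"
    then have "g w \<in> \<Omega>" by (rule bij_betwE[OF g, rule_format])
    then have "card (T \<inter> g w) = 1" "card (g w) = 3" using T(3) three by auto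
    from this(1) obtain x where x: "T \<inter> g w = {x}" by (rule card_1_singletonE)
    then obtain y z where "g w = {x, y, z}" "x \<noteq> y" "x \<noteq> z" "y \<noteq> z"
      using three_element_set_with_point[OF \<open>card (g w) = 3\<close>] by blast
    with x show "\<exists>p. g w = {fst p, fst (snd p), snd (snd p)} \<and> T \<inter> g w = {fst p} \<and>
        fst p \<noteq> fst (snd p) \<and> fst p \<noteq> snd (snd p) \<and> fst (snd p) \<noteq> snd (snd p)"
      by (intro exI[of _ "(x, y, z)"]) simp
  qed
  from bchoice[OF this] obtain p where p: "\<forall>w\<in>V. g w = {fst (p w), fst (snd (p w)), snd (snd (p w))} \<and>
      T \<inter> g w = {fst (p w)} \<and> fst (p w) \<noteq> fst (snd (p w)) \<and> fst (p w) \<noteq> snd (snd (p w)) \<and>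
      fst (snd (p w)) \<noteq> snd (snd (p w))"
    by blast
  define t where "t w = fst (p w)" for w
  define a where "a w = fst (snd (p w))" for w
  define b where "b w = snd (snd (p w))" for w
  have triples: "\<forall>w\<in>V. g w = {t w, a w, b w}" and T_triple: "\<forall>w\<in>V. T \<inter> g w = {t w}"
    and distinct: "\<forall>w\<in>V. t w \<noteq> a w \<and> t w \<noteq> b w \<and> a w \<noteq> b w"
    using p unfolding t_def a_def b_def by auto
  have classes: "bij_betw (\<lambda>w. {t w, a w, b w}) V \<Omega>"
    using g triples by (simp cong: bij_betw_cong)
  have T_eq: "T = t ` V"
  proof
    show "t ` V \<subseteq> T" using T_triple by blast
    show "T \<subseteq> t ` V"
      using T(2) T_triple U bij_betw_imp_surj_on[OF g] by blast
  qed
  have "inj_on t V"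
  proof (rule inj_onI)
    fix w w' assume w: "w \<in> V" "w' \<in> V" and "t w = t w'"
    then have "g w \<inter> g w' \<noteq> {}" using triples by auto
    then have "g w = g w'"
      using partition_on_disjoint[OF part] bij_betwE[OF g] w by blast
    then show "w = w'" using inj_onD[OF bij_betw_imp_inj_on[OF g] _ w] by blast
  qed
  have "finite V" unfolding V_def by simp
  have card_tV: "card (t ` V) = card \<Omega>"
    using card_image[OF \<open>inj_on t V\<close>] unfolding V_def by simp
  have basis: "indep (t ` V)" "t ` V \<subseteq> U" using T T_eq by auto
  have maximal: "\<not> indep (insert x (t ` V))" if "x \<in> U - t ` V" for x
  proof
    assume "indep (insert x (t ` V))"
    then have "card (insert x (t ` V)) \<le> card \<Omega>" using rank matroid_mrank_le_iff[OF mat] by blast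
    then show False using that card_tV \<open>finite V\<close> by simp
  qed
  have "\<exists>vec' :: 'a \<Rightarrow> nat \<Rightarrow> bit. (\<forall>I. indep I \<longleftrightarrow> col_indep U vec' I) \<and> standard_form U vec' t V"
    using binary_standard_form[OF rep fU \<open>finite V\<close> \<open>inj_on t V\<close> basis(2,1) maximal] .
  then obtain vec' :: "'a \<Rightarrow> nat \<Rightarrow> bit"
    where rep': "\<forall>I. indep I \<longleftrightarrow> col_indep U vec' I" and std: "standard_form U vec' t V"
    by blast
  have b_sum: "\<forall>w\<in>V. \<forall>r. vec' (b w) r = vec' (t w) r + vec' (a w) r"
  proof (intro ballI allI)
    fix w r assume "w \<in> V"
    then have "{t w, a w, b w} \<in> cycle_space U indep"
      using cycles bij_betwE[OF classes] by blast
    then have "(\<Sum>x\<in>{t w, a w, b w}. vec' x r) = 0"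
      unfolding cycle_space_iff_sum_zero[OF mat rep'] by blast
    then have "vec' (t w) r + (vec' (a w) r + vec' (b w) r) = 0"
      using distinct \<open>w \<in> V\<close> by simp
    then show "vec' (b w) r = vec' (t w) r + vec' (a w) r"
      by (cases "vec' (t w) r"; cases "vec' (a w) r"; cases "vec' (b w) r") simp_all
  qed
  interpret sheltered_standard_form U indep \<Omega> vec' V t a b
    by unfold_locales (fact sh rep' \<open>finite V\<close> std classes distinct b_sum)+
  show ?thesis by (intro exI[of _ V]) (rule ias_representation)
qed

theorem theorem2p11:
  fixes U :: "'a set" and indep :: "'a set \<Rightarrow> bool" and \<Omega> :: "'a set set"
  assumes "three_sheltering U indep \<Omega>"
  shows "(binary U indep \<and> mrank indep \<le> card \<Omega> \<and> (\<forall>\<omega>\<in>\<Omega>. \<omega> \<in> cycle_space U indep))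
     \<longleftrightarrow>
     (\<exists>(V :: nat set) (E :: nat set set) f.
        looped_simple_graph V E \<and>
        matroid_iso f U indep (W V) (ias_indep V E) \<and>
        (\<lambda>\<omega>. f ` \<omega>) ` \<Omega> = vertex_triple ` V)"
proof -
  have sh: "sheltering U indep \<Omega>" using assms by (simp add: three_sheltering_def)
  note forward = ias_representation_if_binary[OF assms]
  note backward = binary_if_ias_representation[OF sheltering_matroid[OF sh] sheltering_partition_on[OF sh]]
  show ?thesis
    by (intro iffI; elim conjE exE) (fact forward backward)+
qed

end
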